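(* Let $c>0$, $D>0$, $k>0$, let the angular power spectrum satisfy $\sum_{l=0}^{\infty}(2l+1)^3C_l<\infty$, and for $L\in\mathbb N$ let $u_L$ be the truncated approximation described in the context. Then there exists a constant $C_L$, depending only on $c$, $D$ and $k$, such that for all $t>0$ \[ \|u_L(\theta ,\varphi ,t+h)-u_L(\theta ,\varphi ,t)\|_{L_2(\Omega \times\mathbb S^{2})} \le C_Lh\quad\text{as } h\to 0+. \]
   Context: On the unit sphere with coordinates $(\theta,\varphi)\in[0,\pi)\times[0,2\pi)$ and measure $\sin\theta\,d\theta\,d\varphi$, $Y_{lm}(\theta,\varphi)=d_{lm}e^{im\varphi}P_l^m(\cos\theta)$, $d_{lm}=(-1)^m\big[\frac{(2l+1)(l-m)!}{4\pi(l+m)!}\big]^{1/2}$, are complex spherical harmonics; $\mathbf 0$ denotes $\theta=\varphi=0$. $T=\sum_{l,m}a_{lm}Y_{lm}$ is a real Gaussian isotropic field with $a_{lm}$ complex Gaussian, $a_{lm}=(-1)^ma_{l,-m}$, $\mathbf E a_{lm}=0$, $\mathbf Ea_{lm}\overline{a_{l'm'}}=\delta_l^{l'}\delta_m^{m'}C_l$, independent for $m\ne-m'$ ($C_l$: angular power spectrum). The truncated approximation (of the solution of $\frac1{c^2}u_{tt}+\frac1Du_t=k^2\Delta_{(\theta,\varphi)}u$, $u|_{t=0}=T$, $u_t|_{t=0}=0$) is $u_L(\theta,\varphi,t)=\exp(-\frac{c^2t}{2D})\sum_{l=0}^{L-1}\sum_{m=-l}^lY_{lm}(\theta,\varphi)\xi_{lm}(t)$,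 with $\xi_{lm}(t)=\sqrt{\frac{4\pi}{2l+1}}a_{lm}\overline{Y_{l0}(\mathbf 0)}[A_l(t)+B_l(t)]$, $A_l(t)=[\cosh(tK_l)+\frac{c^2}{2DK_l}\sinh(tK_l)]\mathbf 1_{\{l\le l^*\}}$, $B_l(t)=[\cos(tK_l')+\frac{c^2}{2DK_l'}\sin(tK_l')]\mathbf 1_{\{l>l^*\}}$, $K_l=\sqrt{\frac{c^4}{4D^2}-c^2l(l+1)k^2}$, $K_l'=\sqrt{c^2l(l+1)k^2-\frac{c^4}{4D^2}}$, $l^*=\frac{\sqrt{D^2k^2+c^2}-Dk}{2Dk}$ (with $\sinh(tK_l)/K_l:=t$ if $K_l=0$). $\|X\|_{L_2(\Omega\times\mathbb S^2)}=(\mathbf E\int_{\mathbb S^2}|X|^2\sin\theta\,d\theta\,d\varphi)^{1/2}$. *)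

theory Defs
  imports "HOL-Probability.Probability" "HOL-Computational_Algebra.Polynomial"
begin

text \<open>Associated Legendre function without Condon-Shortley phase (the phase (-1)^m is
  contained in d_lm), via the Rodrigues formula for 0 <= m <= l:
  P_l^m(x) = 1/(2^l l!) (1-x^2)^(m/2) d^(l+m)/dx^(l+m) (x^2-1)^l,
  and P_l^(-m) = (-1)^m (l-m)!/(l+m)! P_l^m.\<close>
definition assoc_legendre :: "nat \<Rightarrow> int \<Rightarrow> real \<Rightarrow> real" where
  "assoc_legendre l m x =
     (let n = nat \<bar>m\<bar>;
          Pp = 1 / (2 ^ l * fact l) * sqrt (1 - x\<^sup>2) ^ n
               * poly ((pderiv ^^ (l + n)) ([:-1, 0, 1:] ^ l)) x
      in if 0 \<le> m then Pp
         else (-1) ^ n * (fact (l - n) / fact (l + n)) * Pp)"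

definition d_coef :: "nat \<Rightarrow> int \<Rightarrow> real" where
  "d_coef l m = (-1) ^ nat \<bar>m\<bar> *
     sqrt ((2 * real l + 1) * fact (nat (int l - m)) / (4 * pi * fact (nat (int l + m))))"

definition sph_harm :: "nat \<Rightarrow> int \<Rightarrow> real \<Rightarrow> real \<Rightarrow> complex" where
  "sph_harm l m \<theta> \<phi> =
     complex_of_real (d_coef l m) * exp (\<i> * of_int m * of_real \<phi>)
       * complex_of_real (assoc_legendre l m (cos \<theta>))"

definition Kl :: "real \<Rightarrow> real \<Rightarrow> real \<Rightarrow> nat \<Rightarrow> real" where
  "Kl c D k l = sqrt (c ^ 4 / (4 * D\<^sup>2) - c\<^sup>2 * real l * (real l + 1) * k\<^sup>2)"

definition Kl' :: "real \<Rightarrow> real \<Rightarrow> real \<Rightarrow> nat \<Rightarrow> real" where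
  "Kl' c D k l = sqrt (c\<^sup>2 * real l * (real l + 1) * k\<^sup>2 - c ^ 4 / (4 * D\<^sup>2))"

definition lstar :: "real \<Rightarrow> real \<Rightarrow> real \<Rightarrow> real" where
  "lstar c D k = (sqrt (D\<^sup>2 * k\<^sup>2 + c\<^sup>2) - D * k) / (2 * D * k)"

definition sinh_div :: "real \<Rightarrow> real \<Rightarrow> real" where
  "sinh_div t K = (if K = 0 then t else sinh (t * K) / K)"

definition A_fun :: "real \<Rightarrow> real \<Rightarrow> real \<Rightarrow> nat \<Rightarrow> real \<Rightarrow> real" where
  "A_fun c D k l t =
     (if real l \<le> lstar c D k
      then cosh (t * Kl c D k l) + c\<^sup>2 / (2 * D) * sinh_div t (Kl c D k l)
      else 0)"

definition B_fun :: "real \<Rightarrow> real \<Rightarrow> real \<Rightarrow> nat \<Rightarrow> real \<Rightarrow> real" where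
  "B_fun c D k l t =
     (if real l > lstar c D k
      then cos (t * Kl' c D k l) + c\<^sup>2 / (2 * D * Kl' c D k l) * sin (t * Kl' c D k l)
      else 0)"

definition xi :: "real \<Rightarrow> real \<Rightarrow> real \<Rightarrow> (nat \<Rightarrow> int \<Rightarrow> 'a \<Rightarrow> complex)
                    \<Rightarrow> nat \<Rightarrow> int \<Rightarrow> 'a \<Rightarrow> real \<Rightarrow> complex" where
  "xi c D k a l m \<omega> t =
     complex_of_real (sqrt (4 * pi / (2 * real l + 1))) * a l m \<omega>
       * cnj (sph_harm l 0 0 0)
       * complex_of_real (A_fun c D k l t + B_fun c D k l t)"

definition uL :: "real \<Rightarrow> real \<Rightarrow> real \<Rightarrow> nat \<Rightarrow> (nat \<Rightarrow> int \<Rightarrow> 'a \<Rightarrow> complex)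
                    \<Rightarrow> 'a \<Rightarrow> real \<Rightarrow> real \<Rightarrow> real \<Rightarrow> complex" where
  "uL c D k L a \<omega> \<theta> \<phi> t =
     complex_of_real (exp (- (c\<^sup>2 * t / (2 * D))))
       * (\<Sum>l<L. \<Sum>m\<in>{- int l..int l}. sph_harm l m \<theta> \<phi> * xi c D k a l m \<omega> t)"

definition L2_sq :: "'a measure \<Rightarrow> ('a \<Rightarrow> real \<Rightarrow> real \<Rightarrow> complex) \<Rightarrow> ennreal" where
  "L2_sq M X = (\<integral>\<^sup>+ \<omega>. (\<integral>\<^sup>+ x \<in> {0..<pi} \<times> {0..<2*pi}.
       ennreal ((cmod (X \<omega> (fst x) (snd x)))\<^sup>2 * sin (fst x)) \<partial>lborel) \<partial>M)"

definition L2_norm :: "'a measure \<Rightarrow> ('a \<Rightarrow> real \<Rightarrow> real \<Rightarrow> complex) \<Rightarrow> ennreal" where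
  "L2_norm M X = (if L2_sq M X = \<infinity> then \<infinity> else ennreal (sqrt (enn2real (L2_sq M X))))"

definition gaussian_family :: "'a measure \<Rightarrow> 'i set \<Rightarrow> ('i \<Rightarrow> 'a \<Rightarrow> real) \<Rightarrow> bool" where
  "gaussian_family M I X =
     (\<forall>F c. finite F \<longrightarrow> F \<subseteq> I \<longrightarrow>
        (let Y = (\<lambda>\<omega>. \<Sum>i\<in>F. c i * X i \<omega>) in
          (\<exists>\<mu> \<sigma>. \<sigma> > 0 \<and> distributed M lborel Y (normal_density \<mu> \<sigma>))
          \<or> (Y \<in> borel_measurable M \<and> (\<exists>\<mu>. AE \<omega> in M. Y \<omega> = \<mu>))))"

definition idx_set :: "(nat \<times> int) set" where
  "idx_set = {(l, m). \<bar>m\<bar> \<le> int l}"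

definition gaussian_isotropic_coeffs ::
    "'a measure \<Rightarrow> (nat \<Rightarrow> int \<Rightarrow> 'a \<Rightarrow> complex) \<Rightarrow> (nat \<Rightarrow> real) \<Rightarrow> bool" where
  "gaussian_isotropic_coeffs M a C \<longleftrightarrow>
     prob_space M \<and>
     (\<forall>(l, m) \<in> idx_set. a l m \<in> borel_measurable M) \<and>
     gaussian_family M {(l, m, b). (l, m) \<in> idx_set}
        (\<lambda>(l, m, b) \<omega>. if b then Re (a l m \<omega>) else Im (a l m \<omega>)) \<and>
     (\<forall>(l, m) \<in> idx_set. \<forall>\<omega> \<in> space M. a l (- m) \<omega> = (-1) ^ nat \<bar>m\<bar> * cnj (a l m \<omega>)) \<and>
     (\<forall>(l, m) \<in> idx_set. integrable M (a l m) \<and> (\<integral>\<omega>. a l m \<omega> \<partial>M) = 0) \<and>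
     (\<forall>(l, m) \<in> idx_set. \<forall>(l', m') \<in> idx_set.
        integrable M (\<lambda>\<omega>. a l m \<omega> * cnj (a l' m' \<omega>)) \<and>
        (\<integral>\<omega>. a l m \<omega> * cnj (a l' m' \<omega>) \<partial>M)
          = (if l = l' \<and> m = m' then complex_of_real (C l) else 0)) \<and>
     (\<forall>(l, m) \<in> idx_set. \<forall>(l', m') \<in> idx_set.
        (l, m) \<noteq> (l', m') \<and> m \<noteq> - m' \<longrightarrow>
        prob_space.indep_var M borel (a l m) borel (a l' m'))"

end

theory Submission
  imports Defs
begin

(* Every term of u_L factors as Y_lm(theta, phi) * sqrt (4 pi / (2l + 1)) * conj (Y_l0(0)) * a_lm * g_l(t)
   with the deterministic time factor g_l(t) = exp (-a t) (A_l(t) + B_l(t)), a = c^2 / (2D).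
   Each g_l is Lipschitz on [0, oo). For l <= l* we have 0 <= K_l <= a and
   g_l' = -(a^2 - K_l^2) exp (-a t) sinh (t K_l) / K_l, bounded by a + K_l since sinh y <= y exp y
   and x exp (-x) <= 1; for l > l* we have K_l' > 0 and
   g_l' = -(a^2 + K_l'^2) exp (-a t) sin (t K_l') / K_l'. As the spherical harmonics are bounded,
   |u_L(s) - u_L(t)| <= B |s - t| sum |a_lm| pointwise, and Cauchy-Schwarz with E |a_lm|^2 = C_l
   bounds the squared L2 norm by 2 pi^2 B^2 |s - t|^2 N sum C_l, where N is the number of terms
   and 2 pi^2 the area of the parameter rectangle. *)

lemma lipschitz_on_of_has_real_derivative_bound:
  fixes f f' :: "real \<Rightarrow> real"
  assumes "convex S" "0 \<le> B"
    and "\<And>x. x \<in> S \<Longrightarrow> (f has_real_derivative f' x) (at x within S)"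
    and "\<And>x. x \<in> S \<Longrightarrow> \<bar>f' x\<bar> \<le> B"
  shows "B-lipschitz_on S f"
  using field_differentiable_bound[OF assms(1,3)] assms(2,4)
  by (intro lipschitz_onI) (auto simp: dist_real_def)

lemma sinh_le_mult_exp:
  fixes y :: real assumes "0 \<le> y"
  shows "sinh y \<le> y * exp y"
proof -
  have "sinh y = exp y * (1 - exp (- (2 * y))) / 2"
    by (simp add: sinh_def algebra_simps flip: exp_add)
  also have "\<dots> \<le> exp y * (2 * y) / 2"
    using exp_ge_add_one_self[of "- (2 * y)"] by (intro divide_right_mono mult_left_mono) auto
  finally show ?thesis by (simp add: mult.commute)
qed

lemma sinh_div_bounds:
  assumes "0 \<le> K" "0 \<le> t"
  shows "0 \<le> sinh_div t K" "sinh_div t K \<le> t * exp (t * K)"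
proof -
  show "0 \<le> sinh_div t K"
    using assms by (simp add: sinh_div_def)
  show "sinh_div t K \<le> t * exp (t * K)"
  proof (cases "K = 0")
    case False
    then have "sinh (t * K) / K \<le> t * K * exp (t * K) / K"
      using assms sinh_le_mult_exp[of "t * K"] by (intro divide_right_mono) auto
    then show ?thesis using False by (simp add: sinh_div_def)
  qed (simp add: sinh_div_def)
qed

lemma has_real_derivative_damped_cosh:
  fixes a K :: real
  shows "((\<lambda>t. exp (- (a * t)) * (cosh (t * K) + a * sinh_div t K)) has_real_derivative
           - (a\<^sup>2 - K\<^sup>2) * exp (- (a * t)) * sinh_div t K) (at t)"
proof (cases "K = 0")
  case True
  show ?thesis unfolding True sinh_div_def
    by (auto intro!: derivative_eq_intros simp: power2_eq_square algebra_simps)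
next
  case False
  have "(\<lambda>t. sinh_div t K) = (\<lambda>t. sinh (t * K) / K)"
    using False by (simp add: sinh_div_def fun_eq_iff)
  then show ?thesis using False
    by (auto intro!: derivative_eq_intros simp: sinh_div_def power2_eq_square field_simps)
qed

lemma has_real_derivative_damped_cos:
  fixes a K :: real assumes "K \<noteq> 0"
  shows "((\<lambda>t. exp (- (a * t)) * (cos (t * K) + a / K * sin (t * K))) has_real_derivative
           - (a\<^sup>2 + K\<^sup>2) * exp (- (a * t)) * sin (t * K) / K) (at t)"
  using assms
  by (auto intro!: derivative_eq_intros simp: power2_eq_square field_simps)

lemma damped_cosh_lipschitz:
  fixes a K :: real assumes "0 \<le> K" "K \<le> a"
  shows "(a + K)-lipschitz_on {0..} (\<lambda>t. exp (- (a * t)) * (cosh (t * K) + a * sinh_div t K))"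
proof (rule lipschitz_on_of_has_real_derivative_bound)
  fix t :: real assume "t \<in> {0..}"
  then have t: "0 \<le> t" by simp
  have "(a - K) * exp (- (a * t)) * sinh_div t K \<le> (a - K) * exp (- (a * t)) * (t * exp (t * K))"
    using assms sinh_div_bounds(2)[OF assms(1) t] by (intro mult_left_mono) auto
  also have "\<dots> = (a - K) * t * exp (- ((a - K) * t))"
    by (simp add: algebra_simps flip: exp_add)
  also have "\<dots> \<le> 1"
  proof -
    have "(a - K) * t \<le> exp ((a - K) * t)"
      using exp_ge_add_one_self[of "(a - K) * t"] by linarith
    then show ?thesis by (simp add: exp_minus divide_inverse[symmetric])
  qed
  finally have "(a + K) * ((a - K) * exp (- (a * t)) * sinh_div t K) \<le> a + K"
    using assms by (simp add: mult_left_le)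
  moreover have "0 \<le> (a + K) * ((a - K) * exp (- (a * t)) * sinh_div t K)"
    using assms sinh_div_bounds(1)[OF assms(1) t] by simp
  moreover have "- (a\<^sup>2 - K\<^sup>2) * exp (- (a * t)) * sinh_div t K
        = - ((a + K) * ((a - K) * exp (- (a * t)) * sinh_div t K))"
    by (simp add: power2_eq_square algebra_simps)
  ultimately show "\<bar>- (a\<^sup>2 - K\<^sup>2) * exp (- (a * t)) * sinh_div t K\<bar> \<le> a + K"
    by (simp only: abs_minus_cancel abs_of_nonneg)
qed (use assms has_real_derivative_damped_cosh in \<open>auto intro: has_field_derivative_at_within\<close>)

lemma damped_cos_lipschitz:
  fixes a K :: real assumes "0 \<le> a" "0 < K"
  shows "((a\<^sup>2 + K\<^sup>2) / K)-lipschitz_on {0..} (\<lambda>t. exp (- (a * t)) * (cos (t * K) + a / K * sin (t * K)))"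
proof (rule lipschitz_on_of_has_real_derivative_bound)
  fix t :: real assume "t \<in> {0..}"
  then have "exp (- (a * t)) \<le> 1" using assms by simp
  then have "exp (- (a * t)) * \<bar>sin (t * K)\<bar> \<le> 1"
    using abs_sin_le_one by (metis exp_ge_zero abs_ge_zero mult_le_one)
  have "\<bar>- (a\<^sup>2 + K\<^sup>2) * exp (- (a * t)) * sin (t * K) / K\<bar>
        = (a\<^sup>2 + K\<^sup>2) * (exp (- (a * t)) * \<bar>sin (t * K)\<bar>) / K"
    using assms by (simp add: abs_mult)
  also have "\<dots> \<le> (a\<^sup>2 + K\<^sup>2) / K"
    using assms \<open>exp (- (a * t)) * \<bar>sin (t * K)\<bar> \<le> 1\<close>
    by (intro divide_right_mono mult_left_le) auto
  finally show "\<bar>- (a\<^sup>2 + K\<^sup>2) * exp (- (a * t)) * sin (t * K) / K\<bar> \<le> (a\<^sup>2 + K\<^sup>2) / K" .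
qed (use assms has_real_derivative_damped_cos in \<open>auto intro: has_field_derivative_at_within\<close>)

(* l* is the nonnegative root of x (x + 1) = c^2 / (4 D^2 k^2). *)
lemma le_lstar_iff:
  fixes c D k x :: real assumes "0 < c" "0 < D" "0 < k" "0 \<le> x"
  shows "x \<le> lstar c D k \<longleftrightarrow> c\<^sup>2 * x * (x + 1) * k\<^sup>2 \<le> c ^ 4 / (4 * D\<^sup>2)"
proof -
  define s where "s = lstar c D k"
  define r where "r = sqrt (D\<^sup>2 * k\<^sup>2 + c\<^sup>2)"
  have r2: "r\<^sup>2 = D\<^sup>2 * k\<^sup>2 + c\<^sup>2" and "D * k < r"
    using assms by (auto simp: r_def real_less_rsqrt power_mult_distrib)
  then have s0: "0 \<le> s"
    using assms by (simp add: s_def lstar_def r_def[symmetric])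
  have s_root: "s * (s + 1) = c\<^sup>2 / (4 * D\<^sup>2 * k\<^sup>2)"
    using assms r2 by (simp add: s_def lstar_def r_def[symmetric] field_simps power2_eq_square)
  have "x \<le> s \<longleftrightarrow> x * (x + 1) \<le> s * (s + 1)"
  proof
    assume "x \<le> s" then show "x * (x + 1) \<le> s * (s + 1)"
      using assms(4) by (intro mult_mono) auto
  next
    assume "x * (x + 1) \<le> s * (s + 1)" then show "x \<le> s"
      using assms(4) s0 mult_strict_mono[of s x "s + 1" "x + 1"] by fastforce
  qed
  also have "\<dots> \<longleftrightarrow> c\<^sup>2 * k\<^sup>2 * (x * (x + 1)) \<le> c\<^sup>2 * k\<^sup>2 * (s * (s + 1))"
    using assms by simp
  also have "c\<^sup>2 * k\<^sup>2 * (s * (s + 1)) = c ^ 4 / (4 * D\<^sup>2)"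
    unfolding s_root using assms by (simp add: field_simps power2_eq_square power4_eq_xxxx)
  finally show ?thesis by (simp add: s_def algebra_simps)
qed

definition time_factor :: "real \<Rightarrow> real \<Rightarrow> real \<Rightarrow> nat \<Rightarrow> real \<Rightarrow> real" where
  "time_factor c D k l t = exp (- (c\<^sup>2 * t / (2 * D))) * (A_fun c D k l t + B_fun c D k l t)"

lemma time_factor_lipschitz:
  fixes c D k :: real assumes "0 < c" "0 < D" "0 < k"
  shows "\<exists>M. M-lipschitz_on {0..} (time_factor c D k l)"
proof -
  define a where "a = c\<^sup>2 / (2 * D)"
  have a: "0 < a" "a\<^sup>2 = c ^ 4 / (4 * D\<^sup>2)"
    using assms by (simp_all add: a_def power2_eq_square power4_eq_xxxx)
  show ?thesis
  proof (cases "real l \<le> lstar c D k")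
    case True
    define K where "K = Kl c D k l"
    have "c\<^sup>2 * real l * (real l + 1) * k\<^sup>2 \<le> a\<^sup>2"
      using True le_lstar_iff[OF assms, of "real l"] a by simp
    moreover have K_eq: "K = sqrt (a\<^sup>2 - c\<^sup>2 * real l * (real l + 1) * k\<^sup>2)"
      using a by (simp add: K_def Kl_def)
    ultimately have "0 \<le> K" by simp
    have "K \<le> sqrt (a\<^sup>2)"
      unfolding K_eq by (intro real_sqrt_le_mono) simp
    then have "K \<le> a" using a(1) by simp
    have "time_factor c D k l = (\<lambda>t. exp (- (a * t)) * (cosh (t * K) + a * sinh_div t K))"
      using True by (simp add: fun_eq_iff time_factor_def A_fun_def B_fun_def K_def a_def)
    then show ?thesis using damped_cosh_lipschitz[OF \<open>0 \<le> K\<close> \<open>K \<le> a\<close>] by auto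
  next
    case False
    define K where "K = Kl' c D k l"
    have "a\<^sup>2 < c\<^sup>2 * real l * (real l + 1) * k\<^sup>2"
      using False le_lstar_iff[OF assms, of "real l"] a by simp
    then have "0 < K"
      using a by (simp add: K_def Kl'_def)
    have "time_factor c D k l = (\<lambda>t. exp (- (a * t)) * (cos (t * K) + a / K * sin (t * K)))"
      using False by (simp add: fun_eq_iff time_factor_def A_fun_def B_fun_def K_def a_def)
    then show ?thesis using damped_cos_lipschitz[OF less_imp_le[OF a(1)] \<open>0 < K\<close>] by auto
  qed
qed

lemma assoc_legendre_bounded: "\<exists>B. \<forall>x\<in>{-1..1}. \<bar>assoc_legendre l m x\<bar> \<le> B"
proof -
  have "continuous_on {-1..1} (assoc_legendre l m)"
    unfolding assoc_legendre_def Let_def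
    by (cases "0 \<le> m") (auto intro!: continuous_intros)
  then have "bounded (assoc_legendre l m ` {-1..1})"
    by (intro compact_imp_bounded compact_continuous_image) auto
  then show ?thesis unfolding bounded_iff by auto
qed

lemma sph_harm_bounded: "\<exists>B. \<forall>\<theta> \<phi>. cmod (sph_harm l m \<theta> \<phi>) \<le> B"
proof -
  obtain B where B: "\<forall>x\<in>{-1..1}. \<bar>assoc_legendre l m x\<bar> \<le> B"
    using assoc_legendre_bounded by blast
  have "cmod (sph_harm l m \<theta> \<phi>) = \<bar>d_coef l m\<bar> * \<bar>assoc_legendre l m (cos \<theta>)\<bar>" for \<theta> \<phi>
    by (simp add: sph_harm_def norm_mult norm_exp_eq_Re)
  then have "cmod (sph_harm l m \<theta> \<phi>) \<le> \<bar>d_coef l m\<bar> * B" for \<theta> \<phi>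
    using B by (auto intro!: mult_left_mono)
  then show ?thesis by blast
qed

lemma L2_sq_le_of_pointwise_bound:
  assumes "integrable M G" and bound: "\<And>\<omega> \<theta> \<phi>. (cmod (X \<omega> \<theta> \<phi>))\<^sup>2 \<le> G \<omega>"
  shows "L2_sq M X \<le> ennreal (2 * pi\<^sup>2 * (\<integral>\<omega>. G \<omega> \<partial>M))"
proof -
  define S where "S = {0..<pi} \<times> {0..<2 * pi}"
  have "S \<in> sets (lborel \<Otimes>\<^sub>M lborel)"
    unfolding S_def by (intro pair_measureI) auto
  then have "S \<in> sets lborel" by (simp only: lborel_prod)
  moreover have "emeasure lborel S = ennreal (2 * pi\<^sup>2)"
  proof -
    have "emeasure lborel S = emeasure lborel {0..<pi} * emeasure lborel {0..<2 * pi}"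
      unfolding S_def lborel_prod[symmetric] by (intro lborel.emeasure_pair_measure_Times) auto
    then show ?thesis by (simp add: power2_eq_square flip: ennreal_mult)
  qed
  ultimately have inner: "(\<integral>\<^sup>+ x \<in> S. ennreal (G \<omega>) \<partial>lborel) = ennreal (2 * pi\<^sup>2 * G \<omega>)" for \<omega>
    using order_trans[OF zero_le_power2 bound]
    by (simp add: nn_integral_cmult_indicator ennreal_mult' mult.commute)
  have "L2_sq M X \<le> (\<integral>\<^sup>+ \<omega>. (\<integral>\<^sup>+ x \<in> S. ennreal (G \<omega>) \<partial>lborel) \<partial>M)"
    unfolding L2_sq_def S_def[symmetric]
  proof (intro nn_integral_mono mult_right_mono ennreal_leI)
    fix \<omega> x
    show "(cmod (X \<omega> (fst x) (snd x)))\<^sup>2 * sin (fst x) \<le> G \<omega>"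
      using bound[of \<omega> "fst x" "snd x"] mult_left_le[OF sin_le_one zero_le_power2] by (rule order_trans[rotated])
  qed simp
  also have "\<dots> = ennreal (\<integral>\<omega>. 2 * pi\<^sup>2 * G \<omega> \<partial>M)"
    unfolding inner using assms order_trans[OF zero_le_power2 bound]
    by (intro nn_integral_eq_integral) auto
  finally show ?thesis by simp
qed

lemma L2_norm_le_sqrt:
  assumes "L2_sq M X \<le> ennreal r"
  shows "L2_norm M X \<le> ennreal (sqrt r)"
proof (cases "0 \<le> r")
  case True
  have "enn2real (L2_sq M X) \<le> r"
    using enn2real_mono[OF assms] True by simp
  then show ?thesis
    using assms by (auto simp: L2_norm_def top_unique intro!: ennreal_leI)
next
  case False
  then show ?thesis using assms by (simp add: L2_norm_def ennreal_neg)
qed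

lemma gaussian_isotropic_coeffs_second_moment:
  assumes "gaussian_isotropic_coeffs M a C" and "(l, m) \<in> idx_set"
  shows "integrable M (\<lambda>\<omega>. (cmod (a l m \<omega>))\<^sup>2)" and "(\<integral>\<omega>. (cmod (a l m \<omega>))\<^sup>2 \<partial>M) = C l"
proof -
  have sq: "(\<lambda>\<omega>. a l m \<omega> * cnj (a l m \<omega>)) = (\<lambda>\<omega>. complex_of_real ((cmod (a l m \<omega>))\<^sup>2))"
    by (simp only: complex_norm_square)
  have "integrable M (\<lambda>\<omega>. a l m \<omega> * cnj (a l m \<omega>))"
    and "(\<integral>\<omega>. a l m \<omega> * cnj (a l m \<omega>) \<partial>M) = complex_of_real (C l)"
    using assms unfolding gaussian_isotropic_coeffs_def by fastforce+
  then show "integrable M (\<lambda>\<omega>. (cmod (a l m \<omega>))\<^sup>2)" and "(\<integral>\<omega>. (cmod (a l m \<omega>))\<^sup>2 \<partial>M) = C l"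
    unfolding sq complex_of_real_integrable_eq integral_complex_of_real by simp_all
qed

lemma L2_norm_finite_expansion_le:
  assumes g: "gaussian_isotropic_coeffs M a C" and T: "finite T" "T \<subseteq> idx_set"
    and B: "0 \<le> B" "\<And>l m \<theta> \<phi>. (l, m) \<in> T \<Longrightarrow> cmod (f l m \<theta> \<phi>) \<le> B"
  shows "L2_norm M (\<lambda>\<omega> \<theta> \<phi>. \<Sum>(l, m)\<in>T. f l m \<theta> \<phi> * a l m \<omega>)
           \<le> ennreal (B * sqrt (2 * pi\<^sup>2 * card T * (\<Sum>(l, m)\<in>T. C l)))"
proof -
  define G where "G = (\<lambda>\<omega>. B\<^sup>2 * card T * (\<Sum>(l, m)\<in>T. (cmod (a l m \<omega>))\<^sup>2))"
  have pointwise: "(cmod (\<Sum>(l, m)\<in>T. f l m \<theta> \<phi> * a l m \<omega>))\<^sup>2 \<le> G \<omega>" for \<omega> \<theta> \<phi>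
  proof -
    have "cmod (\<Sum>(l, m)\<in>T. f l m \<theta> \<phi> * a l m \<omega>) \<le> (\<Sum>(l, m)\<in>T. B * cmod (a l m \<omega>))"
      by (rule order_trans[OF norm_sum sum_mono])
         (auto simp: norm_mult intro!: mult_right_mono B(2))
    then have "(cmod (\<Sum>(l, m)\<in>T. f l m \<theta> \<phi> * a l m \<omega>))\<^sup>2 \<le> (\<Sum>(l, m)\<in>T. B * cmod (a l m \<omega>))\<^sup>2"
      by (rule power_mono) simp
    also have "\<dots> \<le> (\<Sum>(l, m)\<in>T. (B * cmod (a l m \<omega>))\<^sup>2) * card T"
      using sum_squared_le_sum_of_squares[of "\<lambda>(l, m). B * cmod (a l m \<omega>)" T]
      by (simp add: case_prod_beta)
    also have "\<dots> = G \<omega>"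
      by (simp add: G_def case_prod_beta power_mult_distrib sum_distrib_left sum_distrib_right mult_ac)
    finally show ?thesis .
  qed
  have "integrable M (\<lambda>\<omega>. (cmod (a (fst p) (snd p) \<omega>))\<^sup>2)"
    and "(\<integral>\<omega>. (cmod (a (fst p) (snd p) \<omega>))\<^sup>2 \<partial>M) = C (fst p)" if "p \<in> T" for p
    using gaussian_isotropic_coeffs_second_moment[OF g, of "fst p" "snd p"] T(2) that by auto
  then have G_int: "integrable M G"
    and G_mean: "(\<integral>\<omega>. G \<omega> \<partial>M) = B\<^sup>2 * card T * (\<Sum>(l, m)\<in>T. C l)"
    by (simp_all add: G_def case_prod_beta)
  have "L2_sq M (\<lambda>\<omega> \<theta> \<phi>. \<Sum>(l, m)\<in>T. f l m \<theta> \<phi> * a l m \<omega>)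
      \<le> ennreal (2 * pi\<^sup>2 * (B\<^sup>2 * card T * (\<Sum>(l, m)\<in>T. C l)))"
    using L2_sq_le_of_pointwise_bound[OF G_int pointwise] by (simp only: G_mean)
  also have "2 * pi\<^sup>2 * (B\<^sup>2 * card T * (\<Sum>(l, m)\<in>T. C l))
      = B\<^sup>2 * (2 * pi\<^sup>2 * card T * (\<Sum>(l, m)\<in>T. C l))"
    by (simp only: mult_ac)
  finally have "L2_norm M (\<lambda>\<omega> \<theta> \<phi>. \<Sum>(l, m)\<in>T. f l m \<theta> \<phi> * a l m \<omega>)
      \<le> ennreal (sqrt (B\<^sup>2 * (2 * pi\<^sup>2 * card T * (\<Sum>(l, m)\<in>T. C l))))"
    by (rule L2_norm_le_sqrt)
  then show ?thesis
    by (simp only: real_sqrt_mult real_sqrt_abs abs_of_nonneg[OF B(1)])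
qed

definition pole_factor :: "nat \<Rightarrow> complex" where
  "pole_factor l = complex_of_real (sqrt (4 * pi / (2 * real l + 1))) * cnj (sph_harm l 0 0 0)"

definition harmonic_indices :: "nat \<Rightarrow> (nat \<times> int) set" where
  "harmonic_indices L = Sigma {..<L} (\<lambda>l. {- int l..int l})"

lemma finite_harmonic_indices: "finite (harmonic_indices L)"
  by (simp add: harmonic_indices_def)

lemma harmonic_indices_subset_idx_set: "harmonic_indices L \<subseteq> idx_set"
  by (auto simp: harmonic_indices_def idx_set_def)

lemma uL_eq_sum_harmonic_indices:
  "uL c D k L a \<omega> \<theta> \<phi> t = (\<Sum>(l, m)\<in>harmonic_indices L.
     sph_harm l m \<theta> \<phi> * pole_factor l * complex_of_real (time_factor c D k l t) * a l m \<omega>)"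
proof -
  have "uL c D k L a \<omega> \<theta> \<phi> t = (\<Sum>l<L. \<Sum>m\<in>{- int l..int l}.
      sph_harm l m \<theta> \<phi> * pole_factor l * complex_of_real (time_factor c D k l t) * a l m \<omega>)"
    unfolding uL_def sum_distrib_left
    by (intro sum.cong refl) (simp add: xi_def time_factor_def pole_factor_def algebra_simps)
  also have "\<dots> = (\<Sum>(l, m)\<in>harmonic_indices L.
      sph_harm l m \<theta> \<phi> * pole_factor l * complex_of_real (time_factor c D k l t) * a l m \<omega>)"
    unfolding harmonic_indices_def by (rule sum.Sigma) auto
  finally show ?thesis .
qed

lemma uL_diff_eq_sum:
  "uL c D k L a \<omega> \<theta> \<phi> s - uL c D k L a \<omega> \<theta> \<phi> t = (\<Sum>(l, m)\<in>harmonic_indices L.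
     sph_harm l m \<theta> \<phi> * pole_factor l * complex_of_real (time_factor c D k l s - time_factor c D k l t)
       * a l m \<omega>)"
  unfolding uL_eq_sum_harmonic_indices sum_subtractf[symmetric]
  by (intro sum.cong refl) (auto simp: algebra_simps)

lemma harmonic_terms_uniformly_lipschitz:
  fixes c D k :: real assumes "0 < c" "0 < D" "0 < k"
  obtains B where "0 \<le> B"
    and "\<And>l m \<theta> \<phi> s t. (l, m) \<in> harmonic_indices L \<Longrightarrow> 0 \<le> s \<Longrightarrow> 0 \<le> t \<Longrightarrow>
           cmod (sph_harm l m \<theta> \<phi> * pole_factor l
             * complex_of_real (time_factor c D k l s - time_factor c D k l t)) \<le> B * \<bar>s - t\<bar>"
proof -
  obtain Lip :: "nat \<Rightarrow> real" where Lip: "\<And>l. (Lip l)-lipschitz_on {0..} (time_factor c D k l)"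
    using time_factor_lipschitz[OF assms] by metis
  obtain Y where Y: "\<And>l m \<theta> \<phi>. cmod (sph_harm l m \<theta> \<phi>) \<le> Y l m"
    using sph_harm_bounded by metis
  define H where "H = harmonic_indices L"
  define B where "B = (\<Sum>(l, m)\<in>H. Y l m * cmod (pole_factor l) * Lip l)"
  have nonneg: "0 \<le> Y l m * cmod (pole_factor l) * Lip l" for l m
    using order_trans[OF norm_ge_zero Y] lipschitz_on_nonneg[OF Lip] by simp
  have "0 \<le> B"
    unfolding B_def using nonneg by (auto intro: sum_nonneg)
  moreover have "cmod (sph_harm l m \<theta> \<phi> * pole_factor l
      * complex_of_real (time_factor c D k l s - time_factor c D k l t)) \<le> B * \<bar>s - t\<bar>"
    if "(l, m) \<in> H" "0 \<le> s" "0 \<le> t" for l m \<theta> \<phi> s t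
  proof -
    have "\<bar>time_factor c D k l s - time_factor c D k l t\<bar> \<le> Lip l * \<bar>s - t\<bar>"
      using lipschitz_onD[OF Lip, of s t] that by (simp add: dist_real_def)
    then have "cmod (sph_harm l m \<theta> \<phi>) * cmod (pole_factor l)
        * \<bar>time_factor c D k l s - time_factor c D k l t\<bar>
        \<le> Y l m * cmod (pole_factor l) * Lip l * \<bar>s - t\<bar>"
      using Y[of l m \<theta> \<phi>] order_trans[OF norm_ge_zero Y]
      by (simp only: mult.assoc) (intro mult_mono, auto)
    also have "\<dots> \<le> B * \<bar>s - t\<bar>"
    proof (rule mult_right_mono)
      show "Y l m * cmod (pole_factor l) * Lip l \<le> B"
        unfolding B_def using nonneg finite_harmonic_indices that(1)
        by (intro member_le_sum[of "(l, m)" H "\<lambda>(l, m). Y l m * cmod (pole_factor l) * Lip l", simplified])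
           (auto simp: H_def case_prod_beta)
    qed simp
    finally show ?thesis
      by (simp only: norm_mult norm_of_real)
  qed
  ultimately show ?thesis
    using that unfolding H_def by blast
qed

lemma uL_L2_lipschitz:
  fixes c D k :: real assumes "0 < c" "0 < D" "0 < k"
  obtains CL where "\<And>(M :: 'a measure) a s t. gaussian_isotropic_coeffs M a C \<Longrightarrow> 0 \<le> s \<Longrightarrow> 0 \<le> t \<Longrightarrow>
    L2_norm M (\<lambda>\<omega> \<theta> \<phi>. uL c D k L a \<omega> \<theta> \<phi> s - uL c D k L a \<omega> \<theta> \<phi> t) \<le> ennreal (CL * \<bar>s - t\<bar>)"
proof -
  obtain B where "0 \<le> B" and term_le: "\<And>l m \<theta> \<phi> s t. (l, m) \<in> harmonic_indices L \<Longrightarrow> 0 \<le> s \<Longrightarrow> 0 \<le> t \<Longrightarrow>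
      cmod (sph_harm l m \<theta> \<phi> * pole_factor l
        * complex_of_real (time_factor c D k l s - time_factor c D k l t)) \<le> B * \<bar>s - t\<bar>"
    using harmonic_terms_uniformly_lipschitz[OF assms] by blast
  define H where "H = harmonic_indices L"
  have "L2_norm M (\<lambda>\<omega> \<theta> \<phi>. uL c D k L a \<omega> \<theta> \<phi> s - uL c D k L a \<omega> \<theta> \<phi> t)
      \<le> ennreal (B * sqrt (2 * pi\<^sup>2 * card H * (\<Sum>(l, m)\<in>H. C l)) * \<bar>s - t\<bar>)"
    if g: "gaussian_isotropic_coeffs M a C" and "0 \<le> s" "0 \<le> t" for M :: "'a measure" and a s t
  proof -
    have "L2_norm M (\<lambda>\<omega> \<theta> \<phi>. \<Sum>(l, m)\<in>H. sph_harm l m \<theta> \<phi> * pole_factor l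
        * complex_of_real (time_factor c D k l s - time_factor c D k l t) * a l m \<omega>)
        \<le> ennreal (B * \<bar>s - t\<bar> * sqrt (2 * pi\<^sup>2 * card H * (\<Sum>(l, m)\<in>H. C l)))"
      unfolding H_def using term_le that \<open>0 \<le> B\<close>
      by (intro L2_norm_finite_expansion_le[OF g finite_harmonic_indices harmonic_indices_subset_idx_set])
         auto
    then show ?thesis
      unfolding uL_diff_eq_sum H_def[symmetric] by (simp only: mult_ac)
  qed
  from this show ?thesis by (rule that)
qed

theorem corollary3:
  fixes c D k :: real and L :: nat and C :: "nat \<Rightarrow> real"
  assumes "c > 0" and "D > 0" and "k > 0"
    and "summable (\<lambda>l. (2 * real l + 1) ^ 3 * C l)"
  shows "\<exists>CL :: real. \<forall>(M :: 'a measure) a. gaussian_isotropic_coeffs M a C \<longrightarrow>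
           (\<forall>t > 0. \<forall>\<^sub>F h in at_right 0.
              L2_norm M (\<lambda>\<omega> \<theta> \<phi>. uL c D k L a \<omega> \<theta> \<phi> (t + h) - uL c D k L a \<omega> \<theta> \<phi> t)
                \<le> ennreal (CL * h))"
proof -
  obtain CL where CL: "\<And>(M :: 'a measure) a s t. gaussian_isotropic_coeffs M a C \<Longrightarrow> 0 \<le> s \<Longrightarrow> 0 \<le> t \<Longrightarrow>
    L2_norm M (\<lambda>\<omega> \<theta> \<phi>. uL c D k L a \<omega> \<theta> \<phi> s - uL c D k L a \<omega> \<theta> \<phi> t) \<le> ennreal (CL * \<bar>s - t\<bar>)"
    using uL_L2_lipschitz[OF assms(1-3), where C = C and L = L] by blast
  have "\<forall>\<^sub>F h in at_right 0.
      L2_norm M (\<lambda>\<omega> \<theta> \<phi>. uL c D k L a \<omega> \<theta> \<phi> (t + h) - uL c D k L a \<omega> \<theta> \<phi> t) \<le> ennreal (CL * h)"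
    if "gaussian_isotropic_coeffs M a C" "0 < t" for M :: "'a measure" and a t
  proof (rule eventually_mono[OF eventually_at_right_less])
    fix h :: real assume "0 < h"
    then show "L2_norm M (\<lambda>\<omega> \<theta> \<phi>. uL c D k L a \<omega> \<theta> \<phi> (t + h) - uL c D k L a \<omega> \<theta> \<phi> t)
        \<le> ennreal (CL * h)"
      using CL[OF that(1), of "t + h" t] that(2) by simp
  qed
  then show ?thesis by blast
qed

end
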